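(* If $\mathbb{E}|f(X)|<+\infty$, then (with allocations computed by rule (a) or by rule (b)) $\hat c^k\to c$ almost surely as $k\to\infty$. If moreover $\mathbb{E}(f^2(X))<+\infty$, then almost surely $\hat\sigma_i^k\to\sigma_i$ for every $1\le i\le I$, and $\sum_{i=1}^I p_i\hat\sigma_i^k\to\sigma_*$ as $k\to\infty$.
   Context: Setting. $X$ is an $\mathbb{R}^d$-valued random variable, $f:\mathbb{R}^d\to\mathbb{R}$ is measurable, and $(A_i)_{1\le i\le I}$ is a measurable partition of $\mathbb{R}^d$ with $p_i=\mathbb{P}(X\in A_i)>0$ known for all $i$. $X_i$ denotes a random variable with the conditional law of $X$ given $X\in A_i$, and $c=\mathbb{E}f(X)=\sum_{i=1}^I p_i\mathbb{E}f(X_i)$. When $\mathbb{E}f^2(X)<\infty$: $\sigma_i^2=\mathrm{Var}(f(X_i))$, $\sigma_*=\sum_{i=1}^I p_i\sigma_i$. $(X_i^j)_{1\le i\le I,\,j\ge 1}$ are independent random variables, $X_i^j$ having the law of $X_i$. Adaptive algorithm. Fix deterministic integers $0=N^0<N^1<N^2<\cdots$ with $N^k-N^{k-1}\ge I$ for all $k\ge1$, and set $N_i^0=0$ for all $i$. For each step $k\ge1$: (1) If $k=1$ set $\hat\sigma_i^0=1$ for all $i$; if $k>1$ set $\hat\sigma_i^{k-1}\ge 0$ by $(\hat\sigma_i^{k-1})^2=\frac{1}{N_i^{k-1}}\sum_{j=1}^{N_i^{k-1}}f(X_i^j)^2-\big(\frac{1}{N_i^{k-1}}\sum_{j=1}^{N_i^{k-1}}f(X_i^j)\big)^2$.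 (2) Let $L_k=N^k-N^{k-1}-I$. If $\hat\sigma_i^{k-1}=0$ for all $i$, set $m_i^k=p_iL_k$. Otherwise compute $m_i^k\ge0$ by the chosen rule: Rule (a): $m_i^k=\frac{p_i\hat\sigma_i^{k-1}}{\sum_{j=1}^I p_j\hat\sigma_j^{k-1}}L_k$. Rule (b): set $m_i^k=0$ for every $i$ with $\hat\sigma_i^{k-1}=0$. Let $J$ be the set of the remaining indices, and for $i\in J$ put $n_i=N_i^{k-1}+1$, $\alpha_i=p_i\hat\sigma_i^{k-1}$. Enumerate $J$ as $(1),\dots,(|J|)$ so that $n_{(i)}/\alpha_{(i)}$ is nonincreasing in $i$. Let $i^*$ be the largest $i\in\{1,\dots,|J|-1\}$ such that $\frac{n_{(i)}}{\alpha_{(i)}}\ge\frac{L_k+\sum_{j=i+1}^{|J|}n_{(j)}}{\sum_{j=i+1}^{|J|}\alpha_{(j)}}$, and $i^*=0$ if there is no such $i$. Set $m_{(i)}^k=0$ for $i\le i^*$ and $m_{(i)}^k=\alpha_{(i)}\frac{L_k+\sum_{j=i^*+1}^{|J|}n_{(j)}}{\sum_{j=i^*+1}^{|J|}\alpha_{(j)}}-n_{(i)}$ for $i>i^*$. (3) (Systematic sampling) $\tilde m_i^k=\lfloor m_1^k+\dots+m_i^k\rfloor-\lfloor m_1^k+\dots+m_{i-1}^k\rfloor$ (second term $0$ for $i=1$), and $N_i^k=N_i^{k-1}+1+\tilde m_i^k$; thus $\sum_i N_i^k=N^k$ and at least one new drawing is made in each stratum. (4) The estimator after step $k$ is $\hat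 c^k=\sum_{i=1}^I\frac{p_i}{N_i^k}\sum_{j=1}^{N_i^k}f(X_i^j)$. *)

theory Defs
  imports "HOL-Probability.Probability"
begin

text \<open>Strata are indexed by 1..I, drawings by j = 1, 2, ...\<close>

datatype alloc_rule = RuleA | RuleB

definition emp_sd :: "(nat \<Rightarrow> real) \<Rightarrow> nat \<Rightarrow> real" where
  "emp_sd y n = sqrt ((\<Sum>j=1..n. (y j)^2) / real n - ((\<Sum>j=1..n. y j) / real n)^2)"

definition alloc_a :: "nat \<Rightarrow> (nat \<Rightarrow> real) \<Rightarrow> (nat \<Rightarrow> real) \<Rightarrow> real \<Rightarrow> (nat \<Rightarrow> real) \<Rightarrow> bool" where
  "alloc_a I p s L m \<longleftrightarrow>
     (\<forall>i\<in>{1..I}. m i = p i * s i / (\<Sum>j=1..I. p j * s j) * L)"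

text \<open>Rule (b), used when not all estimated deviations vanish. The enumeration sigma of J
  (ordering n/alpha nonincreasingly) is any admissible one.\<close>
definition alloc_b :: "nat \<Rightarrow> (nat \<Rightarrow> real) \<Rightarrow> (nat \<Rightarrow> real) \<Rightarrow> (nat \<Rightarrow> nat) \<Rightarrow> real
                        \<Rightarrow> (nat \<Rightarrow> real) \<Rightarrow> bool" where
  "alloc_b I p s n L m \<longleftrightarrow>
     (let J = {i\<in>{1..I}. s i \<noteq> 0}; K = card J;
          nn = (\<lambda>i. real (n i) + 1); \<alpha> = (\<lambda>i. p i * s i); r = (\<lambda>i. nn i / \<alpha> i)
      in \<exists>\<sigma>. bij_betw \<sigma> {1..K} J \<and>
            (\<forall>a\<in>{1..K}. \<forall>b\<in>{1..K}. a \<le> b \<longrightarrow> r (\<sigma> b) \<le> r (\<sigma> a)) \<and>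
            (let ist = Max (insert 0 {a\<in>{1..K-1}.
                          r (\<sigma> a) \<ge> (L + (\<Sum>b=a+1..K. nn (\<sigma> b))) / (\<Sum>b=a+1..K. \<alpha> (\<sigma> b))});
                 lam = (L + (\<Sum>b=ist+1..K. nn (\<sigma> b))) / (\<Sum>b=ist+1..K. \<alpha> (\<sigma> b))
             in (\<forall>i\<in>{1..I} - J. m i = 0) \<and>
                (\<forall>a\<in>{1..K}. m (\<sigma> a) = (if a \<le> ist then 0 else \<alpha> (\<sigma> a) * lam - nn (\<sigma> a)))))"

text \<open>Step (2): s = previous estimated deviations, n = previous allocations N_i^(k-1), L = L_k.\<close>
definition allocation :: "alloc_rule \<Rightarrow> nat \<Rightarrow> (nat \<Rightarrow> real) \<Rightarrow> (nat \<Rightarrow> real) \<Rightarrow> (nat \<Rightarrow> nat)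
                           \<Rightarrow> real \<Rightarrow> (nat \<Rightarrow> real) \<Rightarrow> bool" where
  "allocation rule I p s n L m \<longleftrightarrow>
     (if \<forall>i\<in>{1..I}. s i = 0 then (\<forall>i\<in>{1..I}. m i = p i * L)
      else (case rule of RuleA \<Rightarrow> alloc_a I p s L m | RuleB \<Rightarrow> alloc_b I p s n L m))"

definition sys_round :: "(nat \<Rightarrow> real) \<Rightarrow> nat \<Rightarrow> int" where
  "sys_round m i = \<lfloor>\<Sum>j=1..i. m j\<rfloor> - \<lfloor>\<Sum>j=1..i-1. m j\<rfloor>"

text \<open>A trajectory n k i = N_i^k of the adaptive algorithm, given the sample values
  y i j = f(X_i^j) and the deterministic schedule Nseq k = N^k.\<close>
definition adaptive_traj :: "alloc_rule \<Rightarrow> nat \<Rightarrow> (nat \<Rightarrow> real) \<Rightarrow> (nat \<Rightarrow> nat)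
                              \<Rightarrow> (nat \<Rightarrow> nat \<Rightarrow> real) \<Rightarrow> (nat \<Rightarrow> nat \<Rightarrow> nat) \<Rightarrow> bool" where
  "adaptive_traj rule I p Nseq y n \<longleftrightarrow>
     (\<forall>i\<in>{1..I}. n 0 i = 0) \<and>
     (\<forall>k\<ge>1. \<exists>m. allocation rule I p
                    (\<lambda>i. if k = 1 then 1 else emp_sd (y i) (n (k-1) i))
                    (n (k-1)) (real (Nseq k - Nseq (k-1) - I)) m \<and>
                 (\<forall>i\<in>{1..I}. n k i = n (k-1) i + 1 + nat (sys_round m i)))"

definition strat_est :: "nat \<Rightarrow> (nat \<Rightarrow> real) \<Rightarrow> (nat \<Rightarrow> nat \<Rightarrow> real) \<Rightarrow> (nat \<Rightarrow> nat \<Rightarrow> nat) \<Rightarrow> nat \<Rightarrow> real" where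
  "strat_est I p y n k = (\<Sum>i=1..I. p i / real (n k i) * (\<Sum>j=1..n k i. y i j))"

end

theory Submission
  imports Defs
begin

(* The allocation rules matter only through one property: every step draws at least one new
   sample in each stratum, so N_i^k >= k tends to infinity.  The estimator c^k and the empirical
   deviations sigma_i^k are continuous functions of the running means of f(X_i^j) and f(X_i^j)^2
   evaluated at N_i^k.  Hence it suffices to know the strong law of large numbers in each stratum,
   together with p_i E f(X_i) = E[1_{A_i}(X) f(X)], which sums to E f(X) over the partition. *)

section \<open>Deterministic facts about averages\<close>

lemma cesaro_mean:
  fixes c :: "nat \<Rightarrow> real"
  assumes lim: "c \<longlonglongrightarrow> \<mu>"
  shows "(\<lambda>k. (\<Sum>j<k. c j) / real k) \<longlonglongrightarrow> \<mu>"
proof (rule LIMSEQ_I)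
  fix r :: real assume r: "0 < r"
  obtain N where N: "\<And>n. n \<ge> N \<Longrightarrow> norm (c n - \<mu>) < r/2"
    using LIMSEQ_D[OF lim, of "r/2"] r by auto
  define C where "C = (\<Sum>j<N. \<bar>c j - \<mu>\<bar>)"
  obtain K where K: "real K > 2 * C / r" using reals_Archimedean2 by blast
  show "\<exists>no. \<forall>n\<ge>no. norm ((\<Sum>j<n. c j) / real n - \<mu>) < r"
  proof (intro exI[of _ "max (Suc N) (Suc K)"] allI impI)
    fix n assume n: "max (Suc N) (Suc K) \<le> n"
    hence npos: "real n > 0" and nN: "N \<le> n" and nK: "real K < real n" by auto
    have split: "(\<Sum>j<n. c j - \<mu>) = (\<Sum>j<N. c j - \<mu>) + (\<Sum>j\<in>{N..<n}. c j - \<mu>)"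
      using nN by (metis atLeast0LessThan sum.atLeastLessThan_concat zero_le)
    have head: "\<bar>\<Sum>j<N. c j - \<mu>\<bar> \<le> C" unfolding C_def by (rule sum_abs)
    have "\<bar>\<Sum>j\<in>{N..<n}. c j - \<mu>\<bar> \<le> (\<Sum>j\<in>{N..<n}. \<bar>c j - \<mu>\<bar>)" by (rule sum_abs)
    also have "\<dots> \<le> (\<Sum>j\<in>{N..<n}. r/2)"
      using N by (intro sum_mono) (auto intro: less_imp_le)
    also have "\<dots> \<le> real n * (r/2)" using r by simp
    finally have tail: "\<bar>\<Sum>j\<in>{N..<n}. c j - \<mu>\<bar> \<le> real n * (r/2)" .
    have "2 * C / r < real n" using K nK by linarith
    hence "C < real n * (r/2)" using r by (simp add: field_simps)
    hence "\<bar>\<Sum>j<n. c j - \<mu>\<bar> < real n * r" using head tail split by linarith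
    moreover have "(\<Sum>j<n. c j) / real n - \<mu> = (\<Sum>j<n. c j - \<mu>) / real n"
      using npos by (simp add: sum_subtractf field_simps)
    ultimately show "norm ((\<Sum>j<n. c j) / real n - \<mu>) < r"
      using npos by (simp add: abs_divide field_simps)
  qed
qed

lemma averages_eventually_equal:
  fixes a b :: "nat \<Rightarrow> real"
  assumes lim: "(\<lambda>m. (\<Sum>j<m. b j) / real m) \<longlonglongrightarrow> \<mu>"
    and eq: "eventually (\<lambda>j. a j = b j) sequentially"
  shows "(\<lambda>m. (\<Sum>j<m. a j) / real m) \<longlonglongrightarrow> \<mu>"
proof -
  obtain N where N: "\<And>j. N \<le> j \<Longrightarrow> a j = b j" using eq unfolding eventually_sequentially by blast
  define C where "C = (\<Sum>j<N. a j - b j)"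
  have "(\<lambda>m. (\<Sum>j<m. b j) / real m + C / real m) \<longlonglongrightarrow> \<mu> + 0"
    by (intro tendsto_add lim lim_const_over_n)
  moreover have "(\<Sum>j<m. b j) / real m + C / real m = (\<Sum>j<m. a j) / real m" if "N \<le> m" for m
  proof -
    have "(\<Sum>j<m. a j) - (\<Sum>j<m. b j) = (\<Sum>j<m. a j - b j)" by (simp add: sum_subtractf)
    also have "\<dots> = C + (\<Sum>j\<in>{N..<m}. a j - b j)"
      using sum.atLeastLessThan_concat[of 0 N m "\<lambda>j. a j - b j"] that
      by (simp add: atLeast0LessThan C_def)
    also have "(\<Sum>j\<in>{N..<m}. a j - b j) = 0" using N by (intro sum.neutral) auto
    finally show ?thesis by (simp add: add_divide_distrib[symmetric])
  qed
  hence "eventually (\<lambda>m. (\<Sum>j<m. b j) / real m + C / real m = (\<Sum>j<m. a j) / real m) sequentially"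
    by (rule eventually_sequentiallyI)
  ultimately show ?thesis by (simp add: Lim_transform_eventually)
qed

lemma last_index_below:
  fixes k :: "nat \<Rightarrow> nat"
  assumes k_mono: "\<And>i j. i \<le> j \<Longrightarrow> k i \<le> k j" and k_unbounded: "\<And>m. \<exists>n. m < k n"
  obtains idx where "filterlim idx at_top sequentially"
    and "\<And>m. k 0 \<le> m \<Longrightarrow> k (idx m) \<le> m" and "\<And>m. k 0 \<le> m \<Longrightarrow> m < k (Suc (idx m))"
proof
  define idx where "idx m = Max {n. k n \<le> m}" for m
  have fin: "finite {n. k n \<le> m}" for m
  proof -
    obtain N where N: "m < k N" using k_unbounded by blast
    have "{n. k n \<le> m} \<subseteq> {..N}"
    proof
      fix n assume "n \<in> {n. k n \<le> m}"
      hence "k n \<le> m" by simp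
      show "n \<in> {..N}"
      proof (rule ccontr)
        assume "n \<notin> {..N}"
        hence "k N \<le> k n" by (intro k_mono) simp
        thus False using N \<open>k n \<le> m\<close> by simp
      qed
    qed
    thus ?thesis using finite_subset by blast
  qed
  show "filterlim idx at_top sequentially"
    unfolding filterlim_at_top
  proof (intro allI eventually_sequentiallyI)
    fix N m assume "k N \<le> m"
    thus "N \<le> idx m" unfolding idx_def using Max_ge[OF fin] by blast
  qed
  fix m assume "k 0 \<le> m"
  hence "0 \<in> {n. k n \<le> m}" by simp
  then show "k (idx m) \<le> m" unfolding idx_def using Max_in[OF fin, of m] by auto
  show "m < k (Suc (idx m))"
  proof (rule ccontr)
    assume "\<not> m < k (Suc (idx m))"
    hence "Suc (idx m) \<le> idx m" unfolding idx_def using Max_ge[OF fin] by auto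
    thus False by simp
  qed
qed

lemma average_bracket:
  fixes T :: "nat \<Rightarrow> real"
  assumes T_mono: "\<And>i j. i \<le> j \<Longrightarrow> T i \<le> T j" and T_nonneg: "\<And>m. 0 \<le> T m"
    and a: "1 \<le> a" and am: "a \<le> m" and mb: "m < b" and ba: "real b \<le> \<beta> * real a"
  shows "T a / real a / \<beta> \<le> T m / real m" and "T m / real m \<le> \<beta> * (T b / real b)"
proof -
  have m_pos: "0 < real m" using am a by simp
  have "T a / real a / \<beta> = T a / (\<beta> * real a)" by simp
  also have "\<dots> \<le> T a / real b"
    using ba a mb T_nonneg[of a] by (intro divide_left_mono) auto
  also have "\<dots> \<le> T m / real m"
    using T_mono[OF am] mb m_pos T_nonneg[of a] by (intro frac_le) auto
  finally show "T a / real a / \<beta> \<le> T m / real m" .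
  have "T m / real m \<le> T b / real a"
    using T_mono[of m b] mb am a T_nonneg[of m] m_pos by (intro frac_le) auto
  also have "\<dots> = (T b / real b) * (real b / real a)"
    using a mb am by (simp add: field_simps)
  also have "\<dots> \<le> (T b / real b) * \<beta>"
    using ba a T_nonneg[of b] by (intro mult_left_mono) (auto simp: field_simps)
  finally show "T m / real m \<le> \<beta> * (T b / real b)" by (simp add: mult.commute)
qed

lemma averages_between_grid_points:
  fixes T :: "nat \<Rightarrow> real" and k :: "nat \<Rightarrow> nat"
  assumes T_mono: "\<And>i j. i \<le> j \<Longrightarrow> T i \<le> T j"
    and T_nonneg: "\<And>m. 0 \<le> T m"
    and k_mono: "\<And>i j. i \<le> j \<Longrightarrow> k i \<le> k j"
    and k_pos: "1 \<le> k 0"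
    and k_unbounded: "\<And>m. \<exists>n. m < k n"
    and lim: "(\<lambda>n. T (k n) / real (k n)) \<longlonglongrightarrow> \<mu>"
    and beta: "1 \<le> \<beta>"
    and ratio: "eventually (\<lambda>n. real (k (Suc n)) \<le> \<beta> * real (k n)) sequentially"
    and eps: "0 < \<epsilon>"
  shows "eventually (\<lambda>m. T m / real m \<le> \<beta>*\<mu> + \<epsilon> \<and> \<mu>/\<beta> - \<epsilon> \<le> T m / real m) sequentially"
proof -
  obtain idx where idx_lim: "filterlim idx at_top sequentially"
    and idx_below: "\<And>m. k 0 \<le> m \<Longrightarrow> k (idx m) \<le> m"
    and idx_above: "\<And>m. k 0 \<le> m \<Longrightarrow> m < k (Suc (idx m))"
    using last_index_below[OF k_mono k_unbounded] by blast
  define u where "u n = T (k n) / real (k n)" for n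
  have "(\<lambda>m. \<beta> * u (Suc (idx m))) \<longlonglongrightarrow> \<beta> * \<mu>"
    using lim unfolding u_def[symmetric]
    by (intro tendsto_mult tendsto_const filterlim_compose[OF _ filterlim_compose[OF filterlim_Suc idx_lim]])
  hence e1: "eventually (\<lambda>m. \<beta> * u (Suc (idx m)) < \<beta>*\<mu> + \<epsilon>) sequentially"
    by (rule order_tendstoD(2)) (use eps in simp)
  have "(\<lambda>m. u (idx m) / \<beta>) \<longlonglongrightarrow> \<mu> / \<beta>"
    using lim beta unfolding u_def[symmetric]
    by (intro tendsto_divide tendsto_const filterlim_compose[OF _ idx_lim]) auto
  hence e2: "eventually (\<lambda>m. \<mu>/\<beta> - \<epsilon> < u (idx m) / \<beta>) sequentially"
    by (rule order_tendstoD(1)) (use eps in simp)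
  have e3: "eventually (\<lambda>m. real (k (Suc (idx m))) \<le> \<beta> * real (k (idx m))) sequentially"
    using filterlim_iff[THEN iffD1, OF idx_lim, rule_format, OF ratio] by simp
  have e4: "eventually (\<lambda>m. k 0 \<le> m) sequentially" by (rule eventually_ge_at_top)
  from e1 e2 e3 e4 show ?thesis
  proof eventually_elim
    case (elim m)
    have bracket: "k (idx m) \<le> m" "m < k (Suc (idx m))" using idx_below idx_above elim by auto
    have "1 \<le> k (idx m)" using k_mono[of 0 "idx m"] k_pos by simp
    note avg = average_bracket[where T=T, OF T_mono T_nonneg this bracket elim(3)]
    show ?case using avg elim(1,2) unfolding u_def by linarith
  qed
qed

lemma limit_from_sandwiches:
  fixes s :: "nat \<Rightarrow> real" and \<beta> :: "nat \<Rightarrow> real"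
  assumes \<beta>_lim: "\<beta> \<longlonglongrightarrow> 1" and \<beta>_pos: "\<And>l. 0 < \<beta> l"
    and bounds: "\<And>l \<epsilon>. 0 < \<epsilon> \<Longrightarrow>
       eventually (\<lambda>m. s m \<le> \<beta> l * \<mu> + \<epsilon> \<and> \<mu> / \<beta> l - \<epsilon> \<le> s m) sequentially"
  shows "s \<longlonglongrightarrow> \<mu>"
proof (rule order_tendstoI)
  fix a assume a: "a > \<mu>"
  have "(\<lambda>l. \<beta> l * \<mu>) \<longlonglongrightarrow> 1 * \<mu>" by (intro tendsto_intros \<beta>_lim)
  hence "eventually (\<lambda>l. \<beta> l * \<mu> < a) sequentially" using order_tendstoD(2) a by simp
  then obtain l where l: "\<beta> l * \<mu> < a" by (meson eventually_sequentially order_refl)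
  have "0 < (a - \<beta> l * \<mu>)/2" using l by simp
  from bounds[OF this, of l] show "eventually (\<lambda>m. s m < a) sequentially"
  proof (rule eventually_mono)
    fix m assume "s m \<le> \<beta> l * \<mu> + (a - \<beta> l * \<mu>) / 2 \<and> \<mu> / \<beta> l - (a - \<beta> l * \<mu>) / 2 \<le> s m"
    hence "s m \<le> \<beta> l * \<mu> + (a - \<beta> l * \<mu>) / 2" by (rule conjunct1)
    with l show "s m < a" by (simp add: field_simps)
  qed
next
  fix a assume a: "a < \<mu>"
  have "(\<lambda>l. \<mu> / \<beta> l) \<longlonglongrightarrow> \<mu> / 1" by (intro tendsto_intros \<beta>_lim) simp
  hence "eventually (\<lambda>l. a < \<mu> / \<beta> l) sequentially" using order_tendstoD(1) a by simp
  then obtain l where l: "a < \<mu> / \<beta> l" by (meson eventually_sequentially order_refl)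
  have "0 < (\<mu> / \<beta> l - a)/2" using l by simp
  from bounds[OF this, of l] show "eventually (\<lambda>m. a < s m) sequentially"
  proof (rule eventually_mono)
    fix m assume "s m \<le> \<beta> l * \<mu> + (\<mu> / \<beta> l - a)/2 \<and> \<mu> / \<beta> l - (\<mu> / \<beta> l - a)/2 \<le> s m"
    hence "\<mu> / \<beta> l - (\<mu> / \<beta> l - a)/2 \<le> s m" by (rule conjunct2)
    with l show "a < s m" by (simp add: field_simps)
  qed
qed

text \<open>At most y of the events j + 1 < y occur; this is the expectation bound behind truncation.\<close>
lemma count_indices_below:
  fixes y :: real assumes y: "0 \<le> y"
  shows "(\<Sum>j. ennreal (if real j + 1 < y then 1 else 0)) \<le> ennreal y"
proof -
  define N where "N = nat \<lfloor>y\<rfloor>"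
  have "(\<Sum>j. ennreal (if real j + 1 < y then 1 else 0))
      = (\<Sum>j<N. ennreal (if real j + 1 < y then 1 else 0))"
  proof (rule suminf_finite)
    fix j assume "j \<notin> {..<N}"
    hence "N \<le> j" by simp
    hence "real_of_int \<lfloor>y\<rfloor> \<le> real j" unfolding N_def using y by linarith
    hence "\<not> real j + 1 < y" by linarith
    thus "ennreal (if real j + 1 < y then 1 else 0) = 0" by simp
  qed simp
  also have "\<dots> \<le> (\<Sum>j<N. 1)" by (intro sum_mono) auto
  also have "\<dots> = ennreal (real N)" by (simp add: ennreal_of_nat_eq_real_of_nat)
  also have "\<dots> \<le> ennreal y" unfolding N_def using y by (intro ennreal_leI) linarith
  finally show ?thesis .
qed

section \<open>Geometric grids\<close>

definition geom_grid :: "real \<Rightarrow> nat \<Rightarrow> nat" where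
  "geom_grid \<alpha> n = nat \<lfloor>\<alpha> ^ n\<rfloor>"

lemma geom_grid_props:
  assumes \<alpha>: "1 < \<alpha>"
  shows geom_grid_pos: "1 \<le> geom_grid \<alpha> n"
    and geom_grid_le: "real (geom_grid \<alpha> n) \<le> \<alpha> ^ n"
    and geom_grid_ge: "\<alpha> ^ n \<le> 2 * real (geom_grid \<alpha> n)"
    and geom_grid_mono: "i \<le> j \<Longrightarrow> geom_grid \<alpha> i \<le> geom_grid \<alpha> j"
    and geom_grid_unbounded: "\<exists>n. m < geom_grid \<alpha> n"
proof -
  have pow_ge_1: "1 \<le> \<alpha> ^ n" for n using \<alpha> by (simp add: one_le_power)
  show "1 \<le> geom_grid \<alpha> n" unfolding geom_grid_def using pow_ge_1[of n]
    by (metis Num.of_nat_simps(2) le_nat_floor of_nat_1)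
  show "real (geom_grid \<alpha> n) \<le> \<alpha> ^ n" unfolding geom_grid_def using pow_ge_1[of n] by simp
  have "\<alpha> ^ n < real_of_int \<lfloor>\<alpha> ^ n\<rfloor> + 1" by linarith
  moreover have "1 \<le> real_of_int \<lfloor>\<alpha> ^ n\<rfloor>" using pow_ge_1[of n] by simp
  ultimately have "\<alpha> ^ n \<le> 2 * real_of_int \<lfloor>\<alpha> ^ n\<rfloor>" by linarith
  thus "\<alpha> ^ n \<le> 2 * real (geom_grid \<alpha> n)" unfolding geom_grid_def using pow_ge_1[of n] by simp
  show "i \<le> j \<Longrightarrow> geom_grid \<alpha> i \<le> geom_grid \<alpha> j" unfolding geom_grid_def
    using \<alpha> by (intro nat_mono floor_mono power_increasing) auto
  obtain n where "real m + 1 < \<alpha> ^ n" using real_arch_pow[OF \<alpha>] by blast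
  hence "m < geom_grid \<alpha> n" unfolding geom_grid_def by linarith
  thus "\<exists>n. m < geom_grid \<alpha> n" by blast
qed

lemma geom_grid_tendsto:
  assumes \<alpha>: "1 < \<alpha>"
  shows "filterlim (geom_grid \<alpha>) at_top sequentially"
  unfolding filterlim_at_top
proof
  fix N
  obtain n0 where "N < geom_grid \<alpha> n0" using geom_grid_unbounded[OF \<alpha>] by blast
  thus "eventually (\<lambda>n. N \<le> geom_grid \<alpha> n) sequentially"
    using geom_grid_mono[OF \<alpha>] by (intro eventually_sequentiallyI[of n0]) (meson le_trans less_imp_le)
qed

text \<open>Consecutive grid points eventually have ratio at most \<alpha>^2 (the rounding costs one factor \<alpha>).\<close>
lemma geom_grid_ratio:
  assumes \<alpha>: "1 < \<alpha>"
  shows "eventually (\<lambda>n. real (geom_grid \<alpha> (Suc n)) \<le> \<alpha>^2 * real (geom_grid \<alpha> n)) sequentially"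
proof -
  obtain N where N: "\<alpha> / (\<alpha> - 1) < \<alpha> ^ N" using real_arch_pow[OF \<alpha>] by blast
  show ?thesis
  proof (rule eventually_sequentiallyI[of N])
    fix n assume n: "N \<le> n"
    have "\<alpha> ^ N \<le> \<alpha> ^ n" using n \<alpha> by (intro power_increasing) auto
    hence "\<alpha> / (\<alpha> - 1) \<le> \<alpha> ^ n" using N by linarith
    hence "\<alpha> \<le> \<alpha> ^ n * (\<alpha> - 1)" using \<alpha> by (simp add: field_simps)
    hence "\<alpha> * \<alpha> \<le> \<alpha> * (\<alpha> ^ n * (\<alpha> - 1))" using \<alpha> by (intro mult_left_mono) auto
    hence "\<alpha> ^ Suc n \<le> \<alpha>^2 * (\<alpha> ^ n - 1)" by (simp add: power2_eq_square algebra_simps)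
    moreover have "\<alpha> ^ n - 1 \<le> real (geom_grid \<alpha> n)" unfolding geom_grid_def
      using one_le_power[of \<alpha> n] \<alpha> by linarith
    hence "\<alpha>^2 * (\<alpha> ^ n - 1) \<le> \<alpha>^2 * real (geom_grid \<alpha> n)"
      by (intro mult_left_mono) auto
    ultimately show "real (geom_grid \<alpha> (Suc n)) \<le> \<alpha>^2 * real (geom_grid \<alpha> n)"
      using geom_grid_le[OF \<alpha>, of "Suc n"] by linarith
  qed
qed

text \<open>The geometric series (1/\<alpha>)^n restricted to the n with \<alpha>^n \<ge> y starts at the first such n,
  so its sum is at most \<alpha> / ((\<alpha> - 1) y).\<close>
lemma geometric_tail_sum:
  fixes \<alpha> y :: real
  assumes \<alpha>: "1 < \<alpha>" and y: "0 < y"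
  defines "g \<equiv> \<lambda>n. if y \<le> \<alpha> ^ n then (1 / \<alpha>) ^ n else 0"
  shows "summable g" and "suminf g \<le> \<alpha> / ((\<alpha> - 1) * y)"
proof -
  define r where "r = 1 / \<alpha>"
  have r: "0 < r" "r < 1" using \<alpha> unfolding r_def by auto
  have ex: "\<exists>n. y \<le> \<alpha> ^ n" using real_arch_pow[OF \<alpha>, of y] by (auto intro: less_imp_le)
  define n0 where "n0 = (LEAST n. y \<le> \<alpha> ^ n)"
  have n0: "y \<le> \<alpha> ^ n0" unfolding n0_def using LeastI_ex[OF ex] .
  have below: "n < n0 \<Longrightarrow> \<not> y \<le> \<alpha> ^ n" for n unfolding n0_def using not_less_Least by blast
  have above: "y \<le> \<alpha> ^ n" if "n0 \<le> n" for n
    using n0 power_increasing[OF that, of \<alpha>] \<alpha> by linarith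
  have "(\<lambda>i. g (i + n0)) = (\<lambda>i. r ^ n0 * r ^ i)"
  proof
    fix i
    have "y \<le> \<alpha> ^ (i + n0)" by (rule above) simp
    thus "g (i + n0) = r ^ n0 * r ^ i" unfolding g_def r_def by (simp add: power_add)
  qed
  moreover have "(\<lambda>i. r ^ n0 * r ^ i) sums (r ^ n0 * (1 / (1 - r)))"
    using r by (intro sums_mult geometric_sums) auto
  ultimately have "(\<lambda>i. g (i + n0)) sums (r ^ n0 / (1 - r))" by simp
  hence g_sums: "g sums (r ^ n0 / (1 - r))"
    using sums_zero_iff_shift[of n0 g] below unfolding g_def by auto
  thus "summable g" by (rule sums_summable)
  have "r ^ n0 \<le> 1 / y"
    unfolding r_def using n0 y \<alpha> by (simp add: power_one_over field_simps)
  hence "r ^ n0 / (1 - r) \<le> (1 / y) / (1 - r)" using r by (intro divide_right_mono) auto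
  also have "\<dots> = \<alpha> / ((\<alpha> - 1) * y)" using \<alpha> y unfolding r_def by (simp add: field_simps)
  finally show "suminf g \<le> \<alpha> / ((\<alpha> - 1) * y)" using sums_unique[OF g_sums] by simp
qed

text \<open>The key summation estimate of the second-moment argument:
  \<Sum>n y^2 [y \<le> k n] / k n \<le> 2\<alpha>/(\<alpha>-1) y along the grid k = geom_grid \<alpha>, because
  1 / k n \<le> 2 (1/\<alpha>)^n.\<close>
lemma geom_grid_inverse_sum:
  assumes \<alpha>: "1 < \<alpha>" and y: "0 \<le> y"
  shows "(\<Sum>n. ennreal (y^2 * (if y \<le> real (geom_grid \<alpha> n) then 1 / real (geom_grid \<alpha> n) else 0)))
           \<le> ennreal (2 * \<alpha> / (\<alpha> - 1) * y)"
proof (cases "y = 0")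
  case True thus ?thesis by simp
next
  case False
  hence y_pos: "0 < y" using y by simp
  define g where "g n = (if y \<le> \<alpha> ^ n then (1 / \<alpha>) ^ n else 0)" for n
  have term_le: "y^2 * (if y \<le> real (geom_grid \<alpha> n) then 1 / real (geom_grid \<alpha> n) else 0) \<le> 2 * y^2 * g n"
    for n
  proof (cases "y \<le> real (geom_grid \<alpha> n)")
    case True
    have "1 / real (geom_grid \<alpha> n) \<le> 2 / \<alpha> ^ n"
      using geom_grid_ge[OF \<alpha>, of n] geom_grid_pos[OF \<alpha>, of n] \<alpha> by (simp add: field_simps)
    also have "2 / \<alpha> ^ n = 2 * (1 / \<alpha>) ^ n" by (simp add: power_one_over)
    finally have "y^2 * (1 / real (geom_grid \<alpha> n)) \<le> y^2 * (2 * (1 / \<alpha>) ^ n)"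
      by (intro mult_left_mono) auto
    moreover have "y \<le> \<alpha> ^ n" using True geom_grid_le[OF \<alpha>, of n] by linarith
    ultimately show ?thesis using True unfolding g_def by simp
  next
    case False thus ?thesis using \<alpha> unfolding g_def by auto
  qed
  have g_summable: "summable g" and g_sum: "suminf g \<le> \<alpha> / ((\<alpha> - 1) * y)"
    using geometric_tail_sum[OF \<alpha> y_pos] unfolding g_def by auto
  have g_nonneg: "0 \<le> g n" for n unfolding g_def using \<alpha> by auto
  have "(\<Sum>n. ennreal (y^2 * (if y \<le> real (geom_grid \<alpha> n) then 1 / real (geom_grid \<alpha> n) else 0)))
        \<le> (\<Sum>n. ennreal (2 * y^2 * g n))"
    by (intro suminf_le ennreal_leI term_le) auto
  also have "\<dots> = ennreal (2 * y^2 * suminf g)"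
    using g_nonneg g_summable by (simp add: suminf_ennreal2 summable_mult suminf_mult)
  also have "\<dots> \<le> ennreal (2 * \<alpha> / (\<alpha> - 1) * y)"
  proof (rule ennreal_leI)
    have "2 * y^2 * suminf g \<le> 2 * y^2 * (\<alpha> / ((\<alpha> - 1) * y))"
      using g_sum by (intro mult_left_mono) auto
    also have "\<dots> = 2 * \<alpha> / (\<alpha> - 1) * y" using y_pos \<alpha> by (simp add: field_simps power2_eq_square)
    finally show "2 * y^2 * suminf g \<le> 2 * \<alpha> / (\<alpha> - 1) * y" .
  qed
  finally show ?thesis .
qed

lemma average_limit_from_grids:
  fixes T :: "nat \<Rightarrow> real" and \<alpha> :: "nat \<Rightarrow> real"
  assumes T_mono: "\<And>i j. i \<le> j \<Longrightarrow> T i \<le> T j" and T_nonneg: "\<And>m. 0 \<le> T m"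
    and \<alpha>_gt: "\<And>l. 1 < \<alpha> l" and \<alpha>_lim: "\<alpha> \<longlonglongrightarrow> 1"
    and grid_lim: "\<And>l. (\<lambda>n. T (geom_grid (\<alpha> l) n) / real (geom_grid (\<alpha> l) n)) \<longlonglongrightarrow> \<mu>"
  shows "(\<lambda>m. T m / real m) \<longlonglongrightarrow> \<mu>"
proof (rule limit_from_sandwiches[where \<beta>="\<lambda>l. (\<alpha> l)^2"])
  show "(\<lambda>l. (\<alpha> l)^2) \<longlonglongrightarrow> 1" using tendsto_power[OF \<alpha>_lim, of 2] by simp
  show "0 < (\<alpha> l)^2" for l using \<alpha>_gt[of l] by simp
  fix l and \<epsilon> :: real assume "0 < \<epsilon>"
  have \<alpha>l: "1 < \<alpha> l" by (rule \<alpha>_gt)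
  show "eventually (\<lambda>m. T m / real m \<le> (\<alpha> l)^2 * \<mu> + \<epsilon> \<and> \<mu> / (\<alpha> l)^2 - \<epsilon> \<le> T m / real m)
      sequentially"
  proof (rule averages_between_grid_points[OF T_mono T_nonneg _ _ _ grid_lim])
    show "geom_grid (\<alpha> l) i \<le> geom_grid (\<alpha> l) j" if "i \<le> j" for i j
      using geom_grid_mono[OF \<alpha>l that] .
    show "1 \<le> geom_grid (\<alpha> l) 0" by (rule geom_grid_pos[OF \<alpha>l])
    show "\<exists>n. m < geom_grid (\<alpha> l) n" for m by (rule geom_grid_unbounded[OF \<alpha>l])
    show "1 \<le> (\<alpha> l)^2" using \<alpha>l by (simp add: one_le_power)
  qed (use geom_grid_ratio[OF \<alpha>l] \<open>0 < \<epsilon>\<close> in auto)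
qed

context prob_space
begin

lemma ident_distr_integral:
  fixes X Z :: "'a \<Rightarrow> real" and g :: "real \<Rightarrow> real"
  assumes "distr M borel X = distr M borel Z" "X \<in> borel_measurable M" "Z \<in> borel_measurable M"
    "g \<in> borel_measurable borel"
  shows "(\<integral>x. g (X x) \<partial>M) = (\<integral>x. g (Z x) \<partial>M)"
  using integral_distr[OF assms(2,4)] integral_distr[OF assms(3,4)] assms(1) by simp

lemma ident_distr_integrable:
  fixes X Z :: "'a \<Rightarrow> real" and g :: "real \<Rightarrow> real"
  assumes "distr M borel X = distr M borel Z" "X \<in> borel_measurable M" "Z \<in> borel_measurable M"
    "g \<in> borel_measurable borel"
  shows "integrable M (\<lambda>x. g (X x)) \<longleftrightarrow> integrable M (\<lambda>x. g (Z x))"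
  using integrable_distr_eq[OF assms(2,4)] integrable_distr_eq[OF assms(3,4)] assms(1) by simp

lemma ident_distr_nn_integral:
  fixes X Z :: "'a \<Rightarrow> real" and g :: "real \<Rightarrow> ennreal"
  assumes "distr M borel X = distr M borel Z" "X \<in> borel_measurable M" "Z \<in> borel_measurable M"
    "g \<in> borel_measurable borel"
  shows "(\<integral>\<^sup>+x. g (X x) \<partial>M) = (\<integral>\<^sup>+x. g (Z x) \<partial>M)"
  using nn_integral_distr[OF assms(2), of g] nn_integral_distr[OF assms(3), of g] assms(1,4) by simp

lemma ident_distr_compose:
  assumes "distr M N X = distr M N Z" "X \<in> measurable M N" "Z \<in> measurable M N"
    "g \<in> measurable N L"
  shows "distr M L (\<lambda>x. g (X x)) = distr M L (\<lambda>x. g (Z x))"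
proof -
  have "distr M L (\<lambda>x. g (X x)) = distr (distr M N X) L g"
    using assms(2,4) by (simp add: distr_distr comp_def)
  also have "\<dots> = distr M L (\<lambda>x. g (Z x))"
    using assms by (simp add: distr_distr comp_def)
  finally show ?thesis .
qed

lemma AE_summable_if_expectations_finite:
  fixes D :: "nat \<Rightarrow> 'a \<Rightarrow> real"
  assumes meas: "\<And>n. D n \<in> borel_measurable M" and nonneg: "\<And>n x. 0 \<le> D n x"
    and finite: "(\<Sum>n. \<integral>\<^sup>+x. ennreal (D n x) \<partial>M) < \<infinity>"
  shows "AE x in M. summable (\<lambda>n. D n x)"
proof -
  have "(\<integral>\<^sup>+x. (\<Sum>n. ennreal (D n x)) \<partial>M) = (\<Sum>n. \<integral>\<^sup>+x. ennreal (D n x) \<partial>M)"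
    using meas by (intro nn_integral_suminf) auto
  hence "(\<integral>\<^sup>+x. (\<Sum>n. ennreal (D n x)) \<partial>M) \<noteq> \<infinity>" using finite by simp
  hence "AE x in M. (\<Sum>n. ennreal (D n x)) \<noteq> \<infinity>"
    using meas by (intro nn_integral_PInf_AE) auto
  thus ?thesis
    by (rule AE_mp) (use nonneg in \<open>auto intro!: AE_I2 summable_suminf_not_top\<close>)
qed

lemma expectation_square_sum_pairwise_indep:
  fixes W :: "nat \<Rightarrow> 'a \<Rightarrow> real"
  assumes meas: "\<And>j. W j \<in> borel_measurable M"
    and bounded: "\<And>j. \<exists>B. \<forall>x\<in>space M. \<bar>W j x\<bar> \<le> B"
    and indep: "\<And>i j. i \<noteq> j \<Longrightarrow> indep_var borel (W i) borel (W j)"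
    and centred: "\<And>j. expectation (W j) = 0"
  shows "expectation (\<lambda>x. (\<Sum>j<m. W j x)^2) = (\<Sum>j<m. expectation (\<lambda>x. (W j x)^2))"
proof -
  have int: "integrable M (W j)" for j
  proof -
    obtain B where "\<forall>x\<in>space M. \<bar>W j x\<bar> \<le> B" using bounded by blast
    thus ?thesis using meas by (intro integrable_const_bound[where B=B]) auto
  qed
  have int_prod: "integrable M (\<lambda>x. W i x * W j x)" for i j
  proof -
    obtain B1 B2 where "\<forall>x\<in>space M. \<bar>W i x\<bar> \<le> B1" "\<forall>x\<in>space M. \<bar>W j x\<bar> \<le> B2"
      using bounded by blast
    hence "\<forall>x\<in>space M. \<bar>W i x * W j x\<bar> \<le> B1 * B2"
      by (auto simp: abs_mult intro!: mult_mono')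
    thus ?thesis using meas by (intro integrable_const_bound[where B="B1*B2"]) auto
  qed
  have cross: "expectation (\<lambda>x. W i x * W j x) = (if i = j then expectation (\<lambda>x. (W j x)^2) else 0)"
    for i j
    using indep_var_lebesgue_integral[OF indep int int, of i j] centred
    by (cases "i = j") (auto simp: power2_eq_square)
  have "expectation (\<lambda>x. (\<Sum>j<m. W j x)^2) = expectation (\<lambda>x. \<Sum>i<m. \<Sum>j<m. W i x * W j x)"
    by (simp add: power2_eq_square sum_product)
  also have "\<dots> = (\<Sum>i<m. \<Sum>j<m. expectation (\<lambda>x. W i x * W j x))"
    using int_prod by (simp add: integral_sum integrable_sum)
  also have "\<dots> = (\<Sum>j<m. expectation (\<lambda>x. (W j x)^2))"
    by (simp add: cross sum.delta)
  finally show ?thesis .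
qed

end

section \<open>Etemadi's strong law of large numbers\<close>

definition truncate_at :: "nat \<Rightarrow> real \<Rightarrow> real" where
  "truncate_at j y = (if y \<le> real j + 1 then y else 0)"

lemma truncate_at_measurable[measurable]: "truncate_at j \<in> borel_measurable borel"
  unfolding truncate_at_def by measurable

lemma truncate_at_bounds: "0 \<le> y \<Longrightarrow> 0 \<le> truncate_at j y \<and> truncate_at j y \<le> real j + 1"
  unfolding truncate_at_def by auto

locale pairwise_iid_nonneg = prob_space +
  fixes Y :: "nat \<Rightarrow> 'a \<Rightarrow> real"
  assumes Y_measurable: "\<And>j. Y j \<in> borel_measurable M"
    and Y_indep: "\<And>i j. i \<noteq> j \<Longrightarrow> indep_var borel (Y i) borel (Y j)"
    and Y_ident: "\<And>j. distr M borel (Y j) = distr M borel (Y 0)"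
    and Y_nonneg: "\<And>j x. 0 \<le> Y j x"
    and Y_integrable: "integrable M (Y 0)"
begin

declare Y_measurable[measurable]

lemma truncated_integrable: "integrable M (\<lambda>x. g (truncate_at j (Y j x)))"
  if "g \<in> borel_measurable borel" "\<And>y. 0 \<le> y \<Longrightarrow> y \<le> real j + 1 \<Longrightarrow> \<bar>g y\<bar> \<le> B"
  for g :: "real \<Rightarrow> real" and B :: real
  using that truncate_at_bounds[OF Y_nonneg]
  by (intro integrable_const_bound[where B=B]) auto

text \<open>Almost surely, only finitely many Y j exceed their truncation level: the expected number of
  exceedances is at most E Y 0.\<close>
lemma eventually_below_truncation:
  "AE x in M. eventually (\<lambda>j. Y j x \<le> real j + 1) sequentially"
proof -
  define D where "D j x = (if real j + 1 < Y j x then 1 else 0::real)" for j x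
  have D_meas[measurable]: "D j \<in> borel_measurable M" for j unfolding D_def by measurable
  have D_int: "(\<integral>\<^sup>+x. ennreal (D j x) \<partial>M)
      = (\<integral>\<^sup>+x. ennreal (if real j + 1 < Y 0 x then 1 else 0) \<partial>M)" for j
    unfolding D_def
    by (rule ident_distr_nn_integral[OF Y_ident, where g="\<lambda>y. ennreal (if real j + 1 < y then 1 else 0)"])
      auto
  have "(\<Sum>j. \<integral>\<^sup>+x. ennreal (D j x) \<partial>M)
      = (\<integral>\<^sup>+x. (\<Sum>j. ennreal (if real j + 1 < Y 0 x then 1 else 0)) \<partial>M)"
    unfolding D_int by (intro nn_integral_suminf[symmetric]) auto
  also have "\<dots> \<le> (\<integral>\<^sup>+x. ennreal (Y 0 x) \<partial>M)"
    by (intro nn_integral_mono count_indices_below Y_nonneg)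
  also have "\<dots> = ennreal (expectation (Y 0))"
    using Y_nonneg by (intro nn_integral_eq_integral Y_integrable) auto
  finally have "(\<Sum>j. \<integral>\<^sup>+x. ennreal (D j x) \<partial>M) < \<infinity>" using le_less_trans by fastforce
  hence "AE x in M. summable (\<lambda>j. D j x)"
    by (intro AE_summable_if_expectations_finite) (auto simp: D_def)
  thus ?thesis
  proof (rule AE_mp, intro AE_I2 impI)
    fix x assume "summable (\<lambda>j. D j x)"
    hence "(\<lambda>j. D j x) \<longlonglongrightarrow> 0" by (rule summable_LIMSEQ_zero)
    hence "eventually (\<lambda>j. D j x < 1) sequentially" by (rule order_tendstoD) simp
    thus "eventually (\<lambda>j. Y j x \<le> real j + 1) sequentially"
      by (rule eventually_mono) (auto simp: D_def split: if_splits)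
  qed
qed

definition trunc_mean :: "nat \<Rightarrow> real" where
  "trunc_mean j = expectation (\<lambda>x. truncate_at j (Y j x))"

lemma trunc_mean_tendsto: "trunc_mean \<longlonglongrightarrow> expectation (Y 0)"
proof -
  have eq: "trunc_mean j = expectation (\<lambda>x. truncate_at j (Y 0 x))" for j
    unfolding trunc_mean_def by (rule ident_distr_integral[OF Y_ident]) auto
  have "(\<lambda>j. expectation (\<lambda>x. truncate_at j (Y 0 x))) \<longlonglongrightarrow> expectation (Y 0)"
  proof (rule integral_dominated_convergence[where w="Y 0"])
    show "AE x in M. (\<lambda>j. truncate_at j (Y 0 x)) \<longlonglongrightarrow> Y 0 x"
    proof (intro AE_I2 tendsto_eventually)
      fix x
      obtain N :: nat where "Y 0 x \<le> real N" using real_arch_simple by blast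
      thus "eventually (\<lambda>j. truncate_at j (Y 0 x) = Y 0 x) sequentially"
        unfolding truncate_at_def by (intro eventually_sequentiallyI[of N]) auto
    qed
    show "AE x in M. norm (truncate_at j (Y 0 x)) \<le> Y 0 x" for j
      using Y_nonneg unfolding truncate_at_def by auto
  qed (use Y_integrable in auto)
  thus ?thesis unfolding eq .
qed

definition centred_trunc :: "nat \<Rightarrow> 'a \<Rightarrow> real" where
  "centred_trunc j x = truncate_at j (Y j x) - trunc_mean j"

lemma centred_trunc_measurable[measurable]: "centred_trunc j \<in> borel_measurable M"
  unfolding centred_trunc_def by measurable

lemma centred_trunc_bounded: "\<bar>centred_trunc j x\<bar> \<le> real j + 1 + \<bar>trunc_mean j\<bar>"
  using truncate_at_bounds[of "Y j x" j] Y_nonneg[of j x] unfolding centred_trunc_def by linarith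

lemma centred_trunc_indep: "i \<noteq> j \<Longrightarrow> indep_var borel (centred_trunc i) borel (centred_trunc j)"
  using indep_var_compose[OF Y_indep, of i j "\<lambda>y. truncate_at i y - trunc_mean i" borel
      "\<lambda>y. truncate_at j y - trunc_mean j" borel]
  unfolding centred_trunc_def comp_def by simp

lemma centred_trunc_mean_zero: "expectation (centred_trunc j) = 0"
  using truncated_integrable[of "\<lambda>y. y" j "real j + 1"]
  unfolding centred_trunc_def trunc_mean_def by (simp add: prob_space)

lemma centred_trunc_second_moment:
  assumes jk: "j < k"
  shows "expectation (\<lambda>x. (centred_trunc j x)^2)
      \<le> expectation (\<lambda>x. (Y 0 x)^2 * (if Y 0 x \<le> real k then 1 else 0))"
proof -
  have int: "integrable M (\<lambda>x. truncate_at j (Y j x))"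
    by (rule truncated_integrable[where B="real j + 1"]) auto
  have int2: "integrable M (\<lambda>x. (truncate_at j (Y j x))^2)"
    by (rule truncated_integrable[where B="(real j + 1)^2"]) (auto intro: power_mono)
  have "expectation (\<lambda>x. (centred_trunc j x)^2)
      = expectation (\<lambda>x. (truncate_at j (Y j x))^2) - (trunc_mean j)^2"
    unfolding centred_trunc_def trunc_mean_def by (rule variance_eq[OF int int2])
  also have "\<dots> \<le> expectation (\<lambda>x. (truncate_at j (Y j x))^2)" by simp
  also have "\<dots> = expectation (\<lambda>x. (truncate_at j (Y 0 x))^2)"
    by (rule ident_distr_integral[OF Y_ident, where g="\<lambda>y. (truncate_at j y)^2"]) auto
  also have "\<dots> \<le> expectation (\<lambda>x. (Y 0 x)^2 * (if Y 0 x \<le> real k then 1 else 0))"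
  proof (rule integral_mono)
    show "integrable M (\<lambda>x. (truncate_at j (Y 0 x))^2)"
      using int2 ident_distr_integrable[OF Y_ident, of j "\<lambda>y. (truncate_at j y)^2"] by simp
    show "integrable M (\<lambda>x. (Y 0 x)^2 * (if Y 0 x \<le> real k then 1 else 0))"
      using Y_nonneg by (intro integrable_const_bound[where B="(real k)^2"]) (auto intro: power_mono)
    show "(truncate_at j (Y 0 x))^2 \<le> (Y 0 x)^2 * (if Y 0 x \<le> real k then 1 else 0)" for x
      using jk unfolding truncate_at_def by auto
  qed
  finally show ?thesis .
qed

text \<open>Chebyshev-type bound for the average of the first k centred truncated terms: by pairwise
  independence its second moment is at most E[Y_0^2; Y_0 \<le> k] / k.\<close>
lemma centred_trunc_average_second_moment:
  assumes k: "1 \<le> k"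
  shows "(\<integral>\<^sup>+x. ennreal (((\<Sum>j<k. centred_trunc j x) / real k)^2) \<partial>M)
      \<le> (\<integral>\<^sup>+x. ennreal ((Y 0 x)^2 * (if Y 0 x \<le> real k then 1 / real k else 0)) \<partial>M)"
proof -
  define q where "q x = (Y 0 x)^2 * (if Y 0 x \<le> real k then 1 else 0)" for x
  define B where "B = (\<Sum>j<k. real j + 1 + \<bar>trunc_mean j\<bar>)"
  have "\<bar>\<Sum>j<k. centred_trunc j x\<bar> \<le> B" for x
  proof -
    have "\<bar>\<Sum>j<k. centred_trunc j x\<bar> \<le> (\<Sum>j<k. \<bar>centred_trunc j x\<bar>)" by (rule sum_abs)
    also have "\<dots> \<le> B" unfolding B_def by (intro sum_mono centred_trunc_bounded)
    finally show ?thesis .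
  qed
  hence "(\<Sum>j<k. centred_trunc j x)^2 \<le> B^2" for x
    using power_mono[of "\<bar>\<Sum>j<k. centred_trunc j x\<bar>" B 2] by simp
  hence sq_int: "integrable M (\<lambda>x. ((\<Sum>j<k. centred_trunc j x) / real k)^2)"
    by (intro integrable_const_bound[where B="(B / real k)^2"])
      (auto simp: power_divide divide_right_mono)
  have "expectation (\<lambda>x. (\<Sum>j<k. centred_trunc j x)^2) = (\<Sum>j<k. expectation (\<lambda>x. (centred_trunc j x)^2))"
    by (rule expectation_square_sum_pairwise_indep)
      (use centred_trunc_bounded centred_trunc_indep centred_trunc_mean_zero in auto)
  hence "expectation (\<lambda>x. ((\<Sum>j<k. centred_trunc j x) / real k)^2)
      = (\<Sum>j<k. expectation (\<lambda>x. (centred_trunc j x)^2)) / (real k)^2"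
    by (simp add: power_divide)
  also have "\<dots> \<le> (\<Sum>j<k. expectation q) / (real k)^2"
    unfolding q_def by (intro divide_right_mono sum_mono centred_trunc_second_moment) auto
  also have "\<dots> = expectation (\<lambda>x. q x / real k)"
    using k by (simp add: power2_eq_square)
  finally have "expectation (\<lambda>x. ((\<Sum>j<k. centred_trunc j x) / real k)^2) \<le> expectation (\<lambda>x. q x / real k)" .
  moreover have "integrable M (\<lambda>x. q x / real k)"
    unfolding q_def using Y_nonneg
    by (intro integrable_divide integrable_const_bound[where B="(real k)^2"]) (auto intro: power_mono)
  moreover have "(\<lambda>x. q x / real k) = (\<lambda>x. (Y 0 x)^2 * (if Y 0 x \<le> real k then 1 / real k else 0))"
    unfolding q_def by (simp add: fun_eq_iff)
  ultimately show ?thesis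
    by (subst (1 2) nn_integral_eq_integral) (auto simp: sq_int intro!: ennreal_leI)
qed

text \<open>First Borel-Cantelli step: along a geometric grid the squared centred truncated averages
  are almost surely summable, since their expectations sum to at most 2\<alpha>/(\<alpha>-1) E Y 0
  (geom_grid_inverse_sum).\<close>
lemma centred_trunc_grid_summable:
  assumes \<alpha>: "1 < \<alpha>"
  shows "AE x in M. summable (\<lambda>n. ((\<Sum>j<geom_grid \<alpha> n. centred_trunc j x) / real (geom_grid \<alpha> n))^2)"
proof (rule AE_summable_if_expectations_finite)
  define k where "k = geom_grid \<alpha>"
  define r where "r n y = y^2 * (if y \<le> real (k n) then 1 / real (k n) else 0)" for n y
  have "(\<Sum>n. \<integral>\<^sup>+x. ennreal (((\<Sum>j<k n. centred_trunc j x) / real (k n))^2) \<partial>M)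
      \<le> (\<Sum>n. \<integral>\<^sup>+x. ennreal (r n (Y 0 x)) \<partial>M)"
    unfolding r_def k_def
    by (intro suminf_le centred_trunc_average_second_moment geom_grid_pos[OF \<alpha>]) auto
  also have "\<dots> = (\<integral>\<^sup>+x. (\<Sum>n. ennreal (r n (Y 0 x))) \<partial>M)"
    unfolding r_def by (intro nn_integral_suminf[symmetric]) auto
  also have "\<dots> \<le> (\<integral>\<^sup>+x. ennreal (2 * \<alpha> / (\<alpha> - 1) * Y 0 x) \<partial>M)"
    unfolding r_def k_def by (intro nn_integral_mono geom_grid_inverse_sum[OF \<alpha>] Y_nonneg)
  also have "\<dots> = ennreal (expectation (\<lambda>x. 2 * \<alpha> / (\<alpha> - 1) * Y 0 x))"
    using \<alpha> Y_nonneg by (intro nn_integral_eq_integral integrable_mult_right Y_integrable) auto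
  finally show "(\<Sum>n. \<integral>\<^sup>+x. ennreal (((\<Sum>j<geom_grid \<alpha> n. centred_trunc j x) / real (geom_grid \<alpha> n))^2) \<partial>M)
      < \<infinity>"
    unfolding k_def using le_less_trans by fastforce
qed auto

text \<open>Along every geometric grid the averages of the truncated variables converge almost surely:
  the second moments of the centred averages are summable over the grid
  (geom_grid_inverse_sum), and the truncated means converge in Cesaro mean.\<close>
lemma truncated_averages_grid_limit:
  assumes \<alpha>: "1 < \<alpha>"
  shows "AE x in M. (\<lambda>n. (\<Sum>j<geom_grid \<alpha> n. truncate_at j (Y j x)) / real (geom_grid \<alpha> n))
           \<longlonglongrightarrow> expectation (Y 0)"
  using centred_trunc_grid_summable[OF \<alpha>]
proof eventually_elim
  case (elim x)
  define k where "k = geom_grid \<alpha>"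
  define S where "S n = (\<Sum>j<k n. centred_trunc j x) / real (k n)" for n
  have "(\<lambda>n. (S n)^2) \<longlonglongrightarrow> 0"
    using elim unfolding S_def k_def by (rule summable_LIMSEQ_zero)
  hence "(\<lambda>n. sqrt ((S n)^2)) \<longlonglongrightarrow> sqrt 0" by (rule tendsto_real_sqrt)
  hence "(\<lambda>n. \<bar>S n\<bar>) \<longlonglongrightarrow> 0" by simp
  hence "(\<lambda>n. S n) \<longlonglongrightarrow> 0" by (rule tendsto_rabs_zero_iff[THEN iffD1])
  moreover have "(\<lambda>n. (\<Sum>j<k n. trunc_mean j) / real (k n)) \<longlonglongrightarrow> expectation (Y 0)"
    unfolding k_def by (rule filterlim_compose[OF cesaro_mean[OF trunc_mean_tendsto] geom_grid_tendsto[OF \<alpha>]])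
  ultimately have "(\<lambda>n. S n + (\<Sum>j<k n. trunc_mean j) / real (k n)) \<longlonglongrightarrow> expectation (Y 0)"
    using tendsto_add by fastforce
  moreover have "S n + (\<Sum>j<k n. trunc_mean j) / real (k n)
      = (\<Sum>j<k n. truncate_at j (Y j x)) / real (k n)" for n
    unfolding S_def centred_trunc_def by (simp add: sum_subtractf diff_divide_distrib)
  ultimately show ?case unfolding k_def by simp
qed

text \<open>The strong law for nonnegative variables: replace Y j by its truncation (which changes only
  finitely many terms) and interpolate between the points of geometric grids of ratio tending
  to 1 (the truncated partial sums are nondecreasing).\<close>
theorem slln_nonneg: "AE x in M. (\<lambda>n. (\<Sum>j<n. Y j x) / real n) \<longlonglongrightarrow> expectation (Y 0)"
proof -
  define \<alpha> where "\<alpha> l = 1 + 1 / (real l + 1)" for l :: nat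
  have \<alpha>_gt: "1 < \<alpha> l" for l unfolding \<alpha>_def by simp
  have "(\<lambda>l. 1 / (real l + 1)) \<longlonglongrightarrow> 0"
    using LIMSEQ_inverse_real_of_nat by (simp add: inverse_eq_divide add.commute)
  hence \<alpha>_lim: "\<alpha> \<longlonglongrightarrow> 1"
    unfolding \<alpha>_def using tendsto_add[OF tendsto_const, of _ 0 sequentially 1] by simp
  have "AE x in M. \<forall>l. (\<lambda>n. (\<Sum>j<geom_grid (\<alpha> l) n. truncate_at j (Y j x)) / real (geom_grid (\<alpha> l) n))
          \<longlonglongrightarrow> expectation (Y 0)"
    using truncated_averages_grid_limit[OF \<alpha>_gt] by (simp add: AE_all_countable)
  with eventually_below_truncation show ?thesis
  proof eventually_elim
    case (elim x)
    define T where "T m = (\<Sum>j<m. truncate_at j (Y j x))" for m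
    have "(\<lambda>m. T m / real m) \<longlonglongrightarrow> expectation (Y 0)"
    proof (rule average_limit_from_grids[OF _ _ \<alpha>_gt \<alpha>_lim])
      show "T i \<le> T j" if "i \<le> j" for i j
        unfolding T_def using that truncate_at_bounds[OF Y_nonneg] by (intro sum_mono2) auto
      show "0 \<le> T m" for m
        unfolding T_def using truncate_at_bounds[OF Y_nonneg] by (intro sum_nonneg) auto
    qed (use elim(2) in \<open>simp add: T_def\<close>)
    moreover have "eventually (\<lambda>j. Y j x = truncate_at j (Y j x)) sequentially"
      using elim(1) by (rule eventually_mono) (simp add: truncate_at_def)
    ultimately show ?case unfolding T_def by (rule averages_eventually_equal)
  qed
qed

end

text \<open>Proof: apply
  slln_nonneg to the positive and negative parts.\<close>
theorem (in prob_space) slln_pairwise_iid: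
  fixes Y :: "nat \<Rightarrow> 'a \<Rightarrow> real"
  assumes Y_measurable[measurable]: "\<And>j. Y j \<in> borel_measurable M"
    and Y_indep: "\<And>i j. i \<noteq> j \<Longrightarrow> indep_var borel (Y i) borel (Y j)"
    and Y_ident: "\<And>j. distr M borel (Y j) = distr M borel (Y 0)"
    and Y_integrable: "integrable M (Y 0)"
  shows "AE x in M. (\<lambda>n. (\<Sum>j<n. Y j x) / real n) \<longlonglongrightarrow> expectation (Y 0)"
proof -
  have part: "AE x in M. (\<lambda>n. (\<Sum>j<n. g (Y j x)) / real n) \<longlonglongrightarrow> expectation (\<lambda>x. g (Y 0 x))"
    if g[measurable]: "g \<in> borel_measurable borel" and "\<And>y. 0 \<le> g y"
      and "integrable M (\<lambda>x. g (Y 0 x))" for g :: "real \<Rightarrow> real"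
  proof (rule pairwise_iid_nonneg.slln_nonneg, unfold_locales)
    show "indep_var borel (\<lambda>x. g (Y i x)) borel (\<lambda>x. g (Y j x))" if "i \<noteq> j" for i j
      using indep_var_compose[OF Y_indep[OF that] g g] by (simp add: comp_def)
    show "distr M borel (\<lambda>x. g (Y j x)) = distr M borel (\<lambda>x. g (Y 0 x))" for j
      by (rule ident_distr_compose[OF Y_ident]) auto
  qed (use that in auto)
  have pos: "integrable M (\<lambda>x. max (Y 0 x) 0)" and neg: "integrable M (\<lambda>x. max (- Y 0 x) 0)"
    using Y_integrable by (auto intro!: integrable_max integrable_minus)
  have "expectation (Y 0) = expectation (\<lambda>x. max (Y 0 x) 0 - max (- Y 0 x) 0)"
    by (intro arg_cong[where f=expectation]) (auto simp: fun_eq_iff)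
  also have "\<dots> = expectation (\<lambda>x. max (Y 0 x) 0) - expectation (\<lambda>x. max (- Y 0 x) 0)"
    by (rule Bochner_Integration.integral_diff[OF pos neg])
  finally have mean: "expectation (Y 0)
      = expectation (\<lambda>x. max (Y 0 x) 0) - expectation (\<lambda>x. max (- Y 0 x) 0)" .
  have avg: "(\<Sum>j<n. Y j x) / real n
      = (\<Sum>j<n. max (Y j x) 0) / real n - (\<Sum>j<n. max (- Y j x) 0) / real n" for n x
  proof -
    have "(\<Sum>j<n. Y j x) = (\<Sum>j<n. max (Y j x) 0 - max (- Y j x) 0)" by (intro sum.cong) auto
    thus ?thesis by (simp add: sum_subtractf diff_divide_distrib)
  qed
  have "AE x in M. (\<lambda>n. (\<Sum>j<n. max (Y j x) 0) / real n) \<longlonglongrightarrow> expectation (\<lambda>x. max (Y 0 x) 0)"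
    by (rule part) (auto simp: pos)
  moreover have "AE x in M. (\<lambda>n. (\<Sum>j<n. max (- Y j x) 0) / real n)
      \<longlonglongrightarrow> expectation (\<lambda>x. max (- Y 0 x) 0)"
    by (rule part) (auto simp: neg)
  ultimately show ?thesis
    unfolding avg mean by eventually_elim (rule tendsto_diff)
qed

section \<open>Stratified sampling\<close>

lemma (in prob_space) indep_vars_pairwise:
  assumes indep: "indep_vars M' X I" and ab: "a \<in> I" "b \<in> I" "a \<noteq> b"
  shows "indep_var (M' a) (X a) (M' b) (X b)"
proof -
  have "indep_var (PiM {a} M') (\<lambda>\<omega>. restrict (\<lambda>i. X i \<omega>) {a}) (PiM {b} M') (\<lambda>\<omega>. restrict (\<lambda>i. X i \<omega>) {b})"
    by (rule indep_var_restrict[OF indep]) (use ab in auto)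
  hence "indep_var (M' a) ((\<lambda>f. f a) \<circ> (\<lambda>\<omega>. restrict (\<lambda>i. X i \<omega>) {a}))
                   (M' b) ((\<lambda>f. f b) \<circ> (\<lambda>\<omega>. restrict (\<lambda>i. X i \<omega>) {b}))"
    by (rule indep_var_compose) (auto intro: measurable_component_singleton)
  thus ?thesis by (simp add: comp_def)
qed

locale stratified_sampling = prob_space +
  fixes X :: "'a \<Rightarrow> 'b::topological_space" and I :: nat and A :: "nat \<Rightarrow> 'b set"
    and p :: "nat \<Rightarrow> real" and Xs :: "nat \<Rightarrow> nat \<Rightarrow> 'a \<Rightarrow> 'b"
  assumes X_measurable: "X \<in> borel_measurable M"
    and A_borel: "\<And>i. i \<in> {1..I} \<Longrightarrow> A i \<in> sets borel"
    and A_disjoint: "disjoint_family_on A {1..I}"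
    and A_cover: "(\<Union>i\<in>{1..I}. A i) = UNIV"
    and p_pos: "\<And>i. i \<in> {1..I} \<Longrightarrow> 0 < p i"
    and Xs_indep: "indep_vars (\<lambda>_. borel) (\<lambda>ij. Xs (fst ij) (snd ij)) ({1..I} \<times> {1..})"
    and Xs_law: "\<And>i j B. i \<in> {1..I} \<Longrightarrow> 1 \<le> j \<Longrightarrow> B \<in> sets borel \<Longrightarrow>
       measure M (Xs i j -` B \<inter> space M) = measure M (X -` (B \<inter> A i) \<inter> space M) / p i"
begin

declare X_measurable[measurable]

lemma Xs_measurable[measurable]:
  assumes "i \<in> {1..I}" "1 \<le> j"
  shows "Xs i j \<in> borel_measurable M"
  using Xs_indep assms unfolding indep_vars_def2 by force

lemma Xs_pairwise_indep:
  assumes "i \<in> {1..I}" "1 \<le> j" "1 \<le> j'" "j \<noteq> j'"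
  shows "indep_var borel (Xs i j) borel (Xs i j')"
  using indep_vars_pairwise[OF Xs_indep, of "(i, j)" "(i, j')"] assms by auto

lemma Xs_distr:
  assumes i: "i \<in> {1..I}" and j: "1 \<le> j"
  shows "distr M borel (Xs i j) = density (distr M borel X) (\<lambda>x. ennreal (indicator (A i) x / p i))"
proof (rule measure_eqI)
  fix B assume "B \<in> sets (distr M borel (Xs i j))"
  hence B[measurable]: "B \<in> sets borel" by simp
  have Ai[measurable]: "A i \<in> sets borel" using A_borel[OF i] .
  have "emeasure (distr M borel (Xs i j)) B = ennreal (measure M (X -` (B \<inter> A i) \<inter> space M) / p i)"
    using Xs_law[OF i j B] i j by (simp add: emeasure_distr emeasure_eq_measure)
  also have "\<dots> = ennreal (1 / p i) * emeasure (distr M borel X) (B \<inter> A i)"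
    using p_pos[OF i]
    by (simp add: emeasure_distr emeasure_eq_measure ennreal_mult''[symmetric] divide_inverse mult.commute)
  also have "\<dots> = (\<integral>\<^sup>+x. ennreal (1 / p i) * indicator (B \<inter> A i) x \<partial>distr M borel X)"
    by (rule nn_integral_cmult_indicator[symmetric]) auto
  also have "\<dots> = (\<integral>\<^sup>+x. ennreal (indicator (A i) x / p i) * indicator B x \<partial>distr M borel X)"
    by (intro nn_integral_cong) (auto simp: indicator_def)
  also have "\<dots> = emeasure (density (distr M borel X) (\<lambda>x. ennreal (indicator (A i) x / p i))) B"
    by (rule emeasure_density[symmetric]) auto
  finally show "emeasure (distr M borel (Xs i j)) B
      = emeasure (density (distr M borel X) (\<lambda>x. ennreal (indicator (A i) x / p i))) B" .
qed simp

lemma Xs_integral: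
  fixes g :: "'b \<Rightarrow> real"
  assumes i: "i \<in> {1..I}" and j: "1 \<le> j"
    and g[measurable]: "g \<in> borel_measurable borel" and g_int: "integrable M (\<lambda>\<omega>. g (X \<omega>))"
  shows Xs_integrable: "integrable M (\<lambda>\<omega>. g (Xs i j \<omega>))"
    and Xs_expectation: "p i * expectation (\<lambda>\<omega>. g (Xs i j \<omega>))
                           = expectation (\<lambda>\<omega>. indicator (A i) (X \<omega>) * g (X \<omega>))"
proof -
  have Ai[measurable]: "A i \<in> sets borel" using A_borel[OF i] .
  have p: "0 < p i" using p_pos[OF i] .
  have density_nonneg: "AE x in distr M borel X. 0 \<le> indicator (A i) x / p i" using p by auto
  have "integrable M (\<lambda>\<omega>. indicator (A i) (X \<omega>) / p i * g (X \<omega>))"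
  proof (rule Bochner_Integration.integrable_bound)
    show "integrable M (\<lambda>\<omega>. (1 / p i) * g (X \<omega>))" using g_int by (rule integrable_mult_right)
    show "AE x in M. norm (indicator (A i) (X x) / p i * g (X x)) \<le> norm (1 / p i * g (X x))"
      using p by (auto simp: indicator_def abs_mult)
  qed measurable
  hence weighted_int: "integrable (distr M borel X) (\<lambda>x. (indicator (A i) x / p i) *\<^sub>R g x)"
    by (subst integrable_distr_eq) auto
  show "integrable M (\<lambda>\<omega>. g (Xs i j \<omega>))"
    using integrable_density[OF _ _ density_nonneg, of g] weighted_int
      integrable_distr_eq[OF Xs_measurable[OF i j] g] Xs_distr[OF i j] by simp
  have "expectation (\<lambda>\<omega>. g (Xs i j \<omega>)) = integral\<^sup>L (distr M borel (Xs i j)) g"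
    using i j by (simp add: integral_distr)
  also have "\<dots> = integral\<^sup>L (distr M borel X) (\<lambda>x. (indicator (A i) x / p i) *\<^sub>R g x)"
    unfolding Xs_distr[OF i j] by (rule integral_density) (use density_nonneg in auto)
  also have "\<dots> = expectation (\<lambda>\<omega>. (1 / p i) * (indicator (A i) (X \<omega>) * g (X \<omega>)))"
    by (subst integral_distr) auto
  also have "\<dots> = expectation (\<lambda>\<omega>. indicator (A i) (X \<omega>) * g (X \<omega>)) / p i"
    by simp
  finally show "p i * expectation (\<lambda>\<omega>. g (Xs i j \<omega>))
      = expectation (\<lambda>\<omega>. indicator (A i) (X \<omega>) * g (X \<omega>))"
    using p by simp
qed

lemma total_expectation:
  fixes g :: "'b \<Rightarrow> real"
  assumes g[measurable]: "g \<in> borel_measurable borel" and g_int: "integrable M (\<lambda>\<omega>. g (X \<omega>))"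
  shows "(\<Sum>i=1..I. p i * expectation (\<lambda>\<omega>. g (Xs i 1 \<omega>))) = expectation (\<lambda>\<omega>. g (X \<omega>))"
proof -
  have partition: "(\<Sum>i=1..I. indicator (A i) x) = (1::real)" for x
    using indicator_UN_disjoint[OF _ A_disjoint, of x] A_cover by simp
  have "(\<Sum>i=1..I. p i * expectation (\<lambda>\<omega>. g (Xs i 1 \<omega>)))
      = (\<Sum>i=1..I. expectation (\<lambda>\<omega>. indicator (A i) (X \<omega>) * g (X \<omega>)))"
    using Xs_expectation[OF _ _ g g_int] by simp
  also have "\<dots> = expectation (\<lambda>\<omega>. \<Sum>i=1..I. indicator (A i) (X \<omega>) * g (X \<omega>))"
  proof (rule Bochner_Integration.integral_sum[symmetric])
    fix i assume i: "i \<in> {1..I}"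
    have [measurable]: "A i \<in> sets borel" using A_borel[OF i] .
    show "integrable M (\<lambda>\<omega>. indicator (A i) (X \<omega>) * g (X \<omega>))"
      by (rule Bochner_Integration.integrable_bound[OF g_int]) (auto simp: indicator_def)
  qed
  also have "(\<lambda>\<omega>. \<Sum>i=1..I. indicator (A i) (X \<omega>) * g (X \<omega>)) = (\<lambda>\<omega>. g (X \<omega>))"
    unfolding sum_distrib_right[symmetric] partition by simp
  finally show ?thesis .
qed

lemma stratum_slln:
  fixes g :: "'b \<Rightarrow> real"
  assumes i: "i \<in> {1..I}"
    and g[measurable]: "g \<in> borel_measurable borel" and g_int: "integrable M (\<lambda>\<omega>. g (X \<omega>))"
  shows "AE \<omega> in M. (\<lambda>N. (\<Sum>j=1..N. g (Xs i j \<omega>)) / real N) \<longlonglongrightarrow> expectation (\<lambda>\<omega>. g (Xs i 1 \<omega>))"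
proof -
  have [measurable]: "Xs i (Suc j) \<in> borel_measurable M" for j using Xs_measurable[OF i] by simp
  have "AE \<omega> in M. (\<lambda>N. (\<Sum>j<N. g (Xs i (Suc j) \<omega>)) / real N)
      \<longlonglongrightarrow> expectation (\<lambda>\<omega>. g (Xs i (Suc 0) \<omega>))"
  proof (rule slln_pairwise_iid)
    show "indep_var borel (\<lambda>\<omega>. g (Xs i (Suc j) \<omega>)) borel (\<lambda>\<omega>. g (Xs i (Suc j') \<omega>))"
      if "j \<noteq> j'" for j j'
      using indep_var_compose[OF Xs_pairwise_indep[OF i, of "Suc j" "Suc j'"] g g] that
      by (simp add: comp_def)
    show "distr M borel (\<lambda>\<omega>. g (Xs i (Suc j) \<omega>)) = distr M borel (\<lambda>\<omega>. g (Xs i (Suc 0) \<omega>))" for j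
    proof (rule ident_distr_compose[where g=g and N=borel])
      show "distr M borel (Xs i (Suc j)) = distr M borel (Xs i (Suc 0))"
        using Xs_distr[OF i] by simp
    qed measurable
    show "integrable M (\<lambda>\<omega>. g (Xs i (Suc 0) \<omega>))"
      using Xs_integrable[OF i _ g g_int, of 1] by simp
  qed measurable
  thus ?thesis by (simp add: sum.atLeast1_atMost_eq)
qed

lemma strata_slln:
  fixes g :: "'b \<Rightarrow> real"
  assumes "g \<in> borel_measurable borel" and "integrable M (\<lambda>\<omega>. g (X \<omega>))"
  shows "AE \<omega> in M. \<forall>i\<in>{1..I}.
           (\<lambda>N. (\<Sum>j=1..N. g (Xs i j \<omega>)) / real N) \<longlonglongrightarrow> expectation (\<lambda>\<omega>. g (Xs i 1 \<omega>))"
  using stratum_slln[OF _ assms] by (subst AE_finite_all) auto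

lemma stratum_variance:
  fixes f :: "'b \<Rightarrow> real"
  assumes i: "i \<in> {1..I}" and f[measurable]: "f \<in> borel_measurable borel"
    and f2_int: "integrable M (\<lambda>\<omega>. (f (X \<omega>))^2)"
  shows "variance (\<lambda>\<omega>. f (Xs i 1 \<omega>))
      = expectation (\<lambda>\<omega>. (f (Xs i 1 \<omega>))^2) - (expectation (\<lambda>\<omega>. f (Xs i 1 \<omega>)))^2"
proof -
  have "integrable M (\<lambda>\<omega>. f (X \<omega>))"
    by (rule square_integrable_imp_integrable[of "\<lambda>\<omega>. f (X \<omega>)", OF _ f2_int]) measurable
  hence "integrable M (\<lambda>\<omega>. f (Xs i 1 \<omega>))" by (rule Xs_integrable[OF i order_refl f])
  moreover have "integrable M (\<lambda>\<omega>. (f (Xs i 1 \<omega>))^2)"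
    by (rule Xs_integrable[OF i order_refl _ f2_int]) measurable
  ultimately show ?thesis by (rule variance_eq)
qed

end

section \<open>Trajectories of the adaptive algorithm\<close>

text \<open>Every step draws at least one new sample in each stratum, whatever the allocation rule,
  so after k steps each stratum holds at least k samples.\<close>
lemma adaptive_traj_ge_steps:
  assumes traj: "adaptive_traj rule I p Nseq y n" and i: "i \<in> {1..I}"
  shows "k \<le> n k i"
proof (induction k)
  case (Suc k)
  from traj obtain m where "n (Suc k) i = n k i + 1 + nat (sys_round m i)"
    unfolding adaptive_traj_def using i by (metis diff_Suc_1 le_add1 plus_1_eq_Suc)
  thus ?case using Suc by simp
qed simp

lemma adaptive_traj_unbounded:
  assumes "adaptive_traj rule I p Nseq y n" and "i \<in> {1..I}"
  shows "filterlim (\<lambda>k. n k i) at_top sequentially"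
  using adaptive_traj_ge_steps[OF assms] by (intro filterlim_at_top_mono[OF filterlim_ident]) auto

lemma strat_est_tendsto:
  assumes n_lim: "\<And>i. i \<in> {1..I} \<Longrightarrow> filterlim (\<lambda>k. n k i) at_top sequentially"
    and mean_lim: "\<And>i. i \<in> {1..I} \<Longrightarrow> (\<lambda>N. (\<Sum>j=1..N. y i j) / real N) \<longlonglongrightarrow> m i"
  shows "(\<lambda>k. strat_est I p y n k) \<longlonglongrightarrow> (\<Sum>i=1..I. p i * m i)"
proof -
  have "(\<lambda>k. \<Sum>i=1..I. p i * ((\<Sum>j=1..n k i. y i j) / real (n k i))) \<longlonglongrightarrow> (\<Sum>i=1..I. p i * m i)"
  proof (intro tendsto_sum tendsto_mult tendsto_const)
    fix i assume "i \<in> {1..I}"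
    from filterlim_compose[OF mean_lim[OF this] n_lim[OF this]]
    show "(\<lambda>k. (\<Sum>j=1..n k i. y i j) / real (n k i)) \<longlonglongrightarrow> m i" .
  qed
  thus ?thesis unfolding strat_est_def by simp
qed

lemma emp_sd_tendsto:
  assumes N_lim: "filterlim N at_top sequentially"
    and mean_lim: "(\<lambda>n. (\<Sum>j=1..n. y j) / real n) \<longlonglongrightarrow> a"
    and square_lim: "(\<lambda>n. (\<Sum>j=1..n. (y j)^2) / real n) \<longlonglongrightarrow> b"
  shows "(\<lambda>k. emp_sd y (N k)) \<longlonglongrightarrow> sqrt (b - a^2)"
  unfolding emp_sd_def
  by (intro tendsto_real_sqrt tendsto_diff tendsto_power
      filterlim_compose[OF mean_lim N_lim] filterlim_compose[OF square_lim N_lim])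

context stratified_sampling
begin

text \<open>Consistency of the estimator: almost surely the strong law holds in every stratum, and along
  any trajectory of the algorithm all sample sizes tend to infinity.\<close>
lemma adaptive_estimator_consistent:
  fixes f :: "'b \<Rightarrow> real"
  assumes f[measurable]: "f \<in> borel_measurable borel" and f_int: "integrable M (\<lambda>\<omega>. f (X \<omega>))"
  shows "AE \<omega> in M. \<forall>n. adaptive_traj rule I p Nseq (\<lambda>i j. f (Xs i j \<omega>)) n \<longrightarrow>
           (\<lambda>k. strat_est I p (\<lambda>i j. f (Xs i j \<omega>)) n k) \<longlonglongrightarrow> expectation (\<lambda>\<omega>. f (X \<omega>))"
  using strata_slln[OF f f_int]
proof eventually_elim
  case (elim \<omega>)
  show ?case
  proof (intro allI impI)
    fix n assume traj: "adaptive_traj rule I p Nseq (\<lambda>i j. f (Xs i j \<omega>)) n"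
    have "(\<lambda>k. strat_est I p (\<lambda>i j. f (Xs i j \<omega>)) n k)
        \<longlonglongrightarrow> (\<Sum>i=1..I. p i * expectation (\<lambda>\<omega>. f (Xs i 1 \<omega>)))"
      using elim by (intro strat_est_tendsto adaptive_traj_unbounded[OF traj]) auto
    thus "(\<lambda>k. strat_est I p (\<lambda>i j. f (Xs i j \<omega>)) n k) \<longlonglongrightarrow> expectation (\<lambda>\<omega>. f (X \<omega>))"
      by (simp only: total_expectation[OF f f_int])
  qed
qed

lemma adaptive_sd_consistent:
  fixes f :: "'b \<Rightarrow> real"
  assumes f[measurable]: "f \<in> borel_measurable borel"
    and f2_int: "integrable M (\<lambda>\<omega>. (f (X \<omega>))\<^sup>2)"
  shows "AE \<omega> in M. \<forall>n. adaptive_traj rule I p Nseq (\<lambda>i j. f (Xs i j \<omega>)) n \<longrightarrow>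
           (\<forall>i\<in>{1..I}. (\<lambda>k. emp_sd (\<lambda>j. f (Xs i j \<omega>)) (n k i))
              \<longlonglongrightarrow> sqrt (variance (\<lambda>\<omega>'. f (Xs i 1 \<omega>')))) \<and>
           (\<lambda>k. \<Sum>i=1..I. p i * emp_sd (\<lambda>j. f (Xs i j \<omega>)) (n k i))
              \<longlonglongrightarrow> (\<Sum>i=1..I. p i * sqrt (variance (\<lambda>\<omega>'. f (Xs i 1 \<omega>'))))"
proof -
  have f_int: "integrable M (\<lambda>\<omega>. f (X \<omega>))"
    by (rule square_integrable_imp_integrable[of "\<lambda>\<omega>. f (X \<omega>)", OF _ f2_int]) measurable
  have f2: "(\<lambda>x. (f x)\<^sup>2) \<in> borel_measurable borel" by measurable
  from strata_slln[OF f f_int] strata_slln[OF f2 f2_int] show ?thesis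
  proof eventually_elim
    case (elim \<omega>)
    have "(\<lambda>k. emp_sd (\<lambda>j. f (Xs i j \<omega>)) (n k i)) \<longlonglongrightarrow> sqrt (variance (\<lambda>\<omega>'. f (Xs i 1 \<omega>')))"
      if traj: "adaptive_traj rule I p Nseq (\<lambda>i j. f (Xs i j \<omega>)) n" and i: "i \<in> {1..I}" for n i
    proof -
      have "(\<lambda>k. emp_sd (\<lambda>j. f (Xs i j \<omega>)) (n k i)) \<longlonglongrightarrow>
          sqrt (expectation (\<lambda>\<omega>. (f (Xs i 1 \<omega>))\<^sup>2) - (expectation (\<lambda>\<omega>. f (Xs i 1 \<omega>)))\<^sup>2)"
        by (rule emp_sd_tendsto[OF adaptive_traj_unbounded[OF traj i]]) (use elim i in auto)
      thus ?thesis by (simp only: stratum_variance[OF i f f2_int])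
    qed
    thus ?case by (auto intro!: tendsto_sum tendsto_mult tendsto_const)
  qed
qed

end

theorem proposition1p1:
  fixes M :: "'w measure"
    and X :: "'w \<Rightarrow> real ^ 'd"
    and f :: "real ^ 'd \<Rightarrow> real"
    and I :: nat
    and A :: "nat \<Rightarrow> (real ^ 'd) set"
    and p :: "nat \<Rightarrow> real"
    and Xs :: "nat \<Rightarrow> nat \<Rightarrow> 'w \<Rightarrow> real ^ 'd"
    and Nseq :: "nat \<Rightarrow> nat"
    and rule :: alloc_rule
  assumes "prob_space M"
    and "X \<in> borel_measurable M"
    and "f \<in> borel_measurable borel"
    and "\<forall>i\<in>{1..I}. A i \<in> sets borel"
    and "disjoint_family_on A {1..I}"
    and "(\<Union>i\<in>{1..I}. A i) = UNIV"
    and "\<forall>i\<in>{1..I}. p i = measure M (X -` A i \<inter> space M) \<and> p i > 0"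
    and "prob_space.indep_vars M (\<lambda>_. borel) (\<lambda>ij. Xs (fst ij) (snd ij)) ({1..I} \<times> {1..})"
    and "\<forall>i\<in>{1..I}. \<forall>j\<ge>1. \<forall>B\<in>sets borel.
           measure M (Xs i j -` B \<inter> space M) = measure M (X -` (B \<inter> A i) \<inter> space M) / p i"
    and "Nseq 0 = 0"
    and "\<forall>k. Nseq k < Nseq (Suc k) \<and> Nseq k + I \<le> Nseq (Suc k)"
  shows "(integrable M (\<lambda>\<omega>. f (X \<omega>)) \<longrightarrow>
            (AE \<omega> in M. \<forall>n. adaptive_traj rule I p Nseq (\<lambda>i j. f (Xs i j \<omega>)) n \<longrightarrow>
               (\<lambda>k. strat_est I p (\<lambda>i j. f (Xs i j \<omega>)) n k)
                 \<longlonglongrightarrow> (\<integral>\<omega>'. f (X \<omega>') \<partial>M)))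
       \<and> (integrable M (\<lambda>\<omega>. (f (X \<omega>))\<^sup>2) \<longrightarrow>
            (AE \<omega> in M. \<forall>n. adaptive_traj rule I p Nseq (\<lambda>i j. f (Xs i j \<omega>)) n \<longrightarrow>
               (\<forall>i\<in>{1..I}. (\<lambda>k. emp_sd (\<lambda>j. f (Xs i j \<omega>)) (n k i))
                  \<longlonglongrightarrow> sqrt (prob_space.variance M (\<lambda>\<omega>'. f (Xs i 1 \<omega>')))) \<and>
               (\<lambda>k. \<Sum>i=1..I. p i * emp_sd (\<lambda>j. f (Xs i j \<omega>)) (n k i))
                  \<longlonglongrightarrow> (\<Sum>i=1..I. p i * sqrt (prob_space.variance M (\<lambda>\<omega>'. f (Xs i 1 \<omega>'))))))"
proof -
  interpret stratified_sampling M X I A p Xs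
  proof (rule stratified_sampling.intro[OF assms(1) stratified_sampling_axioms.intro])
    show "A i \<in> sets borel" if "i \<in> {1..I}" for i using assms(4) that by blast
    show "0 < p i" if "i \<in> {1..I}" for i using assms(7) that by blast
    show "measure M (Xs i j -` B \<inter> space M) = measure M (X -` (B \<inter> A i) \<inter> space M) / p i"
      if "i \<in> {1..I}" "1 \<le> j" "B \<in> sets borel" for i j B using assms(9) that by blast
  qed (fact assms)+
  show ?thesis
    using adaptive_estimator_consistent[OF assms(3)] adaptive_sd_consistent[OF assms(3)] by blast
qed

end
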